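(* Let $G$ be a $6$-regular graph, $\mathcal S$ a canonical path partition of $G$, and $P$ a path component with end-vertices $o_1,o_2$. Let $x_1,x_2\in V_2$ be path neighbors on $P$, with $x_1$ immediately preceding $x_2$ when $P$ is traversed from $o_1$ to $o_2$, and suppose neither $x_1$ nor $x_2$ is joined by a free edge to a dangerous vertex. If $b(\{x_1\})+b(\{x_2\})>\frac73$, then $x_1$ goes to $o_1$ and $x_2$ goes to $o_2$.
   Context: All graphs are finite, simple and undirected. A path partition of $G=(V,E)$ is a set of vertex-disjoint paths (single vertices allowed) covering $V$; its members are components. A component with $t\ge3$ vertices is a cycle component if the subgraph induced on its vertex set has a spanning cycle; a one-vertex component is an isolated vertex; every other component is a path component. A path partition is canonical if (1) it has the minimum number of components among all path partitions of $G$; (2) among those, it has the maximum number of cycle components; (3) it has no isolated vertices. Given a canonical path partition $\mathcal S$ of $G$: two vertices are path neighbors if they are consecutive on a path component. An edge of $G$ is a free edge unless it joins two path neighbors or has both endpoints in the same cycle component. $V_1$ is the set of end-vertices of path components together with all vertices of cycle components. The remaining vertices are classified by the first applicable rule: $V_2$: joined by a free edge to a vertex of $V_1$; $V_3$: both path neighbors lie in $V_2$; $V_4$: exactly one path neighbor lies in $V_2$; $V_5$: all others. A balanced edge is a free edge with one endpoint in $V_1$ and the other in $V_2$; for $x\in V_2$, $y\in V_1$ we say $x$ goes to $y$ if $xy$ is a balanced edge. A vertex of $V_2$ is moderate if it is incident to at least two balanced edges, at least one of whose other endpoints is an end-vertex of a path component; it is heavy if it is incident to at least three balanced edges whose other endpoints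 are end-vertices of path components. A vertex of $V_3$ is dangerous if one of its path neighbors is heavy and the other is moderate. For $Y\subseteq V_2$, $b(Y)$ is the sum, over all balanced edges $xy$ with $x\in Y$ and $y\in V_1$, of $2/3$ if $y$ is an end-vertex of a path component, $1/|V(C)|$ if $y$ lies in a cycle component $C$ with $|V(C)|\le 6$, and $0$ if $y$ lies in a cycle component with at least $7$ vertices. *)

theory Defs
  imports Complex_Main
begin

definition simple_graph :: "'a set \<Rightarrow> ('a \<Rightarrow> 'a \<Rightarrow> bool) \<Rightarrow> bool" where
  "simple_graph V E \<longleftrightarrow> finite V \<and> (\<forall>u v. E u v \<longrightarrow> u \<in> V \<and> v \<in> V)
     \<and> (\<forall>u v. E u v \<longrightarrow> E v u) \<and> (\<forall>u. \<not> E u u)"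

definition regular :: "'a set \<Rightarrow> ('a \<Rightarrow> 'a \<Rightarrow> bool) \<Rightarrow> nat \<Rightarrow> bool" where
  "regular V E k \<longleftrightarrow> (\<forall>v\<in>V. card {u\<in>V. E v u} = k)"

definition is_path :: "('a \<Rightarrow> 'a \<Rightarrow> bool) \<Rightarrow> 'a list \<Rightarrow> bool" where
  "is_path E p \<longleftrightarrow> p \<noteq> [] \<and> distinct p \<and> (\<forall>i. Suc i < length p \<longrightarrow> E (p!i) (p!Suc i))"

definition path_partition :: "'a set \<Rightarrow> ('a \<Rightarrow> 'a \<Rightarrow> bool) \<Rightarrow> 'a list set \<Rightarrow> bool" where
  "path_partition V E S \<longleftrightarrow> finite S \<and> (\<forall>p\<in>S. is_path E p) \<and> (\<Union>p\<in>S. set p) = V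
     \<and> (\<forall>p\<in>S. \<forall>q\<in>S. p \<noteq> q \<longrightarrow> set p \<inter> set q = {})"

definition cycle_comp :: "('a \<Rightarrow> 'a \<Rightarrow> bool) \<Rightarrow> 'a list \<Rightarrow> bool" where
  "cycle_comp E p \<longleftrightarrow> length p \<ge> 3 \<and>
     (\<exists>q. distinct q \<and> set q = set p \<and> (\<forall>i. Suc i < length q \<longrightarrow> E (q!i) (q!Suc i))
          \<and> E (last q) (hd q))"

definition num_cycles :: "('a \<Rightarrow> 'a \<Rightarrow> bool) \<Rightarrow> 'a list set \<Rightarrow> nat" where
  "num_cycles E S = card {p\<in>S. cycle_comp E p}"

definition canonical :: "'a set \<Rightarrow> ('a \<Rightarrow> 'a \<Rightarrow> bool) \<Rightarrow> 'a list set \<Rightarrow> bool" where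
  "canonical V E S \<longleftrightarrow> path_partition V E S
     \<and> (\<forall>S'. path_partition V E S' \<longrightarrow> card S \<le> card S')
     \<and> (\<forall>S'. path_partition V E S' \<and> card S' = card S \<longrightarrow> num_cycles E S' \<le> num_cycles E S)
     \<and> (\<forall>p\<in>S. length p \<ge> 2)"

definition path_comp :: "('a \<Rightarrow> 'a \<Rightarrow> bool) \<Rightarrow> 'a list set \<Rightarrow> 'a list \<Rightarrow> bool" where
  "path_comp E S p \<longleftrightarrow> p \<in> S \<and> \<not> cycle_comp E p \<and> length p \<ge> 2"

definition path_nbr :: "('a \<Rightarrow> 'a \<Rightarrow> bool) \<Rightarrow> 'a list set \<Rightarrow> 'a \<Rightarrow> 'a \<Rightarrow> bool" where
  "path_nbr E S u v \<longleftrightarrow> (\<exists>p. path_comp E S p \<and> (\<exists>i. Suc i < length p \<and>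
      ((p!i = u \<and> p!Suc i = v) \<or> (p!i = v \<and> p!Suc i = u))))"

definition same_cycle :: "('a \<Rightarrow> 'a \<Rightarrow> bool) \<Rightarrow> 'a list set \<Rightarrow> 'a \<Rightarrow> 'a \<Rightarrow> bool" where
  "same_cycle E S u v \<longleftrightarrow> (\<exists>p\<in>S. cycle_comp E p \<and> u \<in> set p \<and> v \<in> set p)"

definition free_edge :: "('a \<Rightarrow> 'a \<Rightarrow> bool) \<Rightarrow> 'a list set \<Rightarrow> 'a \<Rightarrow> 'a \<Rightarrow> bool" where
  "free_edge E S u v \<longleftrightarrow> E u v \<and> \<not> path_nbr E S u v \<and> \<not> same_cycle E S u v"

definition ends :: "('a \<Rightarrow> 'a \<Rightarrow> bool) \<Rightarrow> 'a list set \<Rightarrow> 'a set" where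
  "ends E S = {v. \<exists>p. path_comp E S p \<and> (v = hd p \<or> v = last p)}"

definition cyc_verts :: "('a \<Rightarrow> 'a \<Rightarrow> bool) \<Rightarrow> 'a list set \<Rightarrow> 'a set" where
  "cyc_verts E S = {v. \<exists>p\<in>S. cycle_comp E p \<and> v \<in> set p}"

definition V1 :: "('a \<Rightarrow> 'a \<Rightarrow> bool) \<Rightarrow> 'a list set \<Rightarrow> 'a set" where
  "V1 E S = ends E S \<union> cyc_verts E S"

definition V2 :: "'a set \<Rightarrow> ('a \<Rightarrow> 'a \<Rightarrow> bool) \<Rightarrow> 'a list set \<Rightarrow> 'a set" where
  "V2 V E S = {v\<in>V. v \<notin> V1 E S \<and> (\<exists>y\<in>V1 E S. free_edge E S v y)}"

definition V3 :: "'a set \<Rightarrow> ('a \<Rightarrow> 'a \<Rightarrow> bool) \<Rightarrow> 'a list set \<Rightarrow> 'a set" where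
  "V3 V E S = {v\<in>V. v \<notin> V1 E S \<and> v \<notin> V2 V E S \<and> (\<forall>u. path_nbr E S u v \<longrightarrow> u \<in> V2 V E S)}"

text \<open>x goes to y: xy is a balanced edge with x in V2 and y in V1.\<close>
definition goes_to :: "'a set \<Rightarrow> ('a \<Rightarrow> 'a \<Rightarrow> bool) \<Rightarrow> 'a list set \<Rightarrow> 'a \<Rightarrow> 'a \<Rightarrow> bool" where
  "goes_to V E S x y \<longleftrightarrow> x \<in> V2 V E S \<and> y \<in> V1 E S \<and> free_edge E S x y"

definition moderate :: "'a set \<Rightarrow> ('a \<Rightarrow> 'a \<Rightarrow> bool) \<Rightarrow> 'a list set \<Rightarrow> 'a \<Rightarrow> bool" where
  "moderate V E S x \<longleftrightarrow> x \<in> V2 V E S \<and> card {y. goes_to V E S x y} \<ge> 2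
     \<and> (\<exists>y\<in>ends E S. goes_to V E S x y)"

definition heavy :: "'a set \<Rightarrow> ('a \<Rightarrow> 'a \<Rightarrow> bool) \<Rightarrow> 'a list set \<Rightarrow> 'a \<Rightarrow> bool" where
  "heavy V E S x \<longleftrightarrow> x \<in> V2 V E S \<and> card {y\<in>ends E S. goes_to V E S x y} \<ge> 3"

definition dangerous :: "'a set \<Rightarrow> ('a \<Rightarrow> 'a \<Rightarrow> bool) \<Rightarrow> 'a list set \<Rightarrow> 'a \<Rightarrow> bool" where
  "dangerous V E S v \<longleftrightarrow> v \<in> V3 V E S \<and> (\<exists>u w. u \<noteq> w \<and> path_nbr E S u v \<and> path_nbr E S w v
      \<and> heavy V E S u \<and> moderate V E S w)"

definition cycle_of :: "('a \<Rightarrow> 'a \<Rightarrow> bool) \<Rightarrow> 'a list set \<Rightarrow> 'a \<Rightarrow> 'a list" where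
  "cycle_of E S y = (THE C. C \<in> S \<and> cycle_comp E C \<and> y \<in> set C)"

definition weight :: "('a \<Rightarrow> 'a \<Rightarrow> bool) \<Rightarrow> 'a list set \<Rightarrow> 'a \<Rightarrow> real" where
  "weight E S y = (if y \<in> ends E S then 2/3
     else if y \<in> cyc_verts E S \<and> card (set (cycle_of E S y)) \<le> 6
       then 1 / real (card (set (cycle_of E S y))) else 0)"

definition bval :: "'a set \<Rightarrow> ('a \<Rightarrow> 'a \<Rightarrow> bool) \<Rightarrow> 'a list set \<Rightarrow> 'a set \<Rightarrow> real" where
  "bval V E S Y = (\<Sum>x\<in>Y. \<Sum>y\<in>{y. goes_to V E S x y}. weight E S y)"

end

theory Submission
  imports Defs
begin

text \<open>
  Cut P between x1 and x2 into a front part (from o1 to x1) and a rear part (from x2 to o2).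
  A balanced edge from x1 or x2 to a vertex y of another component C can be combined with a
  spanning path of C starting at y, and a balanced edge to o1 or o2 closes up part of P.
  Canonicity forbids every rerouting that yields a path partition with fewer components, or with
  equally many components and an additional cycle component. If x1 does not go to o1, the
  configurations that survive are: x1 goes to o2, x2 goes only to o2 and every other target of x1
  lies on a cycle component; x1 and x2 go only to one common end of another path component; or
  all targets except o2 lie on one cycle component C, and neither the targets of x1 nor those of x2
  exhaust C. As a vertex of a 6-regular graph has at most four balanced edges, in each case
  b({x1}) + b({x2}) \<le> 7/3.
\<close>

lemma is_path_append:
  assumes "is_path E xs" "is_path E ys" "set xs \<inter> set ys = {}" "E (last xs) (hd ys)"
  shows "is_path E (xs @ ys)"
  unfolding is_path_def
proof (intro conjI allI impI)
  show "xs @ ys \<noteq> []" using assms(1) by (simp add: is_path_def)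
  show "distinct (xs @ ys)" using assms by (simp add: is_path_def)
  fix j assume j: "Suc j < length (xs @ ys)"
  have xs: "xs \<noteq> []" and ys: "ys \<noteq> []" using assms(1,2) by (simp_all add: is_path_def)
  consider "Suc j < length xs" | "Suc j = length xs" | "length xs \<le> j" by linarith
  then show "E ((xs @ ys) ! j) ((xs @ ys) ! Suc j)"
  proof cases
    case 1 then show ?thesis using assms(1) by (simp add: is_path_def nth_append)
  next
    case 2
    then have "j = length xs - 1" by simp
    then have "(xs @ ys) ! j = last xs" and "(xs @ ys) ! Suc j = hd ys"
      using 2 xs ys by (simp_all add: nth_append last_conv_nth hd_conv_nth)
    then show ?thesis using assms(4) by simp
  next
    case 3
    then have "Suc (j - length xs) < length ys" and "Suc j - length xs = Suc (j - length xs)"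
      using j by simp_all
    then show ?thesis using assms(2) 3 by (simp add: is_path_def nth_append)
  qed
qed

lemma is_path_rev:
  assumes "\<And>u v. E u v \<Longrightarrow> E v u" "is_path E p"
  shows "is_path E (rev p)"
  unfolding is_path_def
proof (intro conjI allI impI)
  show "rev p \<noteq> []" "distinct (rev p)" using assms(2) by (auto simp: is_path_def)
  fix j assume j: "Suc j < length (rev p)"
  let ?k = "length p - Suc (Suc j)"
  have "E (p ! ?k) (p ! Suc ?k)" using assms(2) j by (simp add: is_path_def)
  moreover have "rev p ! j = p ! Suc ?k" "rev p ! Suc j = p ! ?k"
    using j by (simp_all add: rev_nth Suc_diff_Suc)
  ultimately show "E (rev p ! j) (rev p ! Suc j)" using assms(1) by simp
qed

lemma is_path_take:
  assumes "is_path E p" "0 < n" shows "is_path E (take n p)"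
  using assms by (auto simp: is_path_def distinct_take)

lemma is_path_drop:
  assumes "is_path E p" "n < length p" shows "is_path E (drop n p)"
  using assms by (auto simp: is_path_def distinct_drop add.commute)

lemma cycle_comp_path_from:
  assumes cyc: "cycle_comp E A" and dA: "distinct A" and y: "y \<in> set A"
  shows "\<exists>L. is_path E L \<and> set L = set A \<and> hd L = y \<and> last L \<noteq> y"
proof -
  obtain q where dq: "distinct q" and sq: "set q = set A"
    and eq: "\<forall>i. Suc i < length q \<longrightarrow> E (q!i) (q!Suc i)" and closing: "E (last q) (hd q)"
    using cyc unfolding cycle_comp_def by blast
  have pq: "is_path E q" using dq eq y sq unfolding is_path_def by auto
  obtain us ws where q: "q = us @ y # ws" using y sq split_list by fastforce
  define L where "L = (y # ws) @ us"
  have "is_path E L"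
  proof (cases "us = []")
    case True then show ?thesis using pq q by (simp add: L_def)
  next
    case False
    have "is_path E (y # ws)" using is_path_drop[OF pq, of "length us"] q by simp
    moreover have "is_path E us" using is_path_take[OF pq, of "length us"] q False by simp
    ultimately show ?thesis unfolding L_def
      by (rule is_path_append) (use dq q closing False in auto)
  qed
  moreover have "set L = set A" using sq q by (auto simp: L_def)
  moreover have "last L \<noteq> y"
  proof -
    have "length q = length A" using dq dA sq by (metis distinct_card)
    then have ne: "ws @ us \<noteq> []" using cyc q by (auto simp: cycle_comp_def)
    then have "last L \<in> set (ws @ us)" using last_in_set[OF ne] by (simp add: L_def)
    moreover have "y \<notin> set (ws @ us)" using dq q by auto
    ultimately show ?thesis by blast
  qed
  moreover have "hd L = y" by (simp add: L_def)
  ultimately show ?thesis by blast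
qed

definition path_replacement :: "('a \<Rightarrow> 'a \<Rightarrow> bool) \<Rightarrow> 'a list set \<Rightarrow> 'a list set \<Rightarrow> bool" where
  "path_replacement E R N \<longleftrightarrow> finite N \<and> (\<forall>p\<in>N. is_path E p)
     \<and> (\<forall>p\<in>N. \<forall>q\<in>N. p \<noteq> q \<longrightarrow> set p \<inter> set q = {}) \<and> (\<Union>p\<in>N. set p) = (\<Union>p\<in>R. set p)"

lemma path_partition_replace:
  assumes pp: "path_partition V E S" and RS: "R \<subseteq> S" and N: "path_replacement E R N"
  shows "path_partition V E ((S - R) \<union> N)"
proof -
  have uN: "(\<Union>p\<in>N. set p) = (\<Union>p\<in>R. set p)"
    and dN: "\<forall>p\<in>N. \<forall>q\<in>N. p \<noteq> q \<longrightarrow> set p \<inter> set q = {}"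
    using N by (simp_all add: path_replacement_def)
  have uS: "(\<Union>p\<in>S. set p) = V"
    and dS: "\<forall>p\<in>S. \<forall>q\<in>S. p \<noteq> q \<longrightarrow> set p \<inter> set q = {}"
    using pp by (simp_all add: path_partition_def)
  have new_old: "set p \<inter> set q = {}" if p: "p \<in> N" and q: "q \<in> S - R" for p q
  proof -
    have "set p \<subseteq> (\<Union>r\<in>R. set r)" using uN p by (metis UN_upper)
    moreover have "set r \<inter> set q = {}" if r: "r \<in> R" for r
    proof -
      have "r \<in> S" "q \<in> S" "r \<noteq> q" using r RS q by auto
      then show ?thesis using dS by blast
    qed
    ultimately show ?thesis by blast
  qed
  have disj: "set p \<inter> set q = {}"
    if p: "p \<in> (S - R) \<union> N" and q: "q \<in> (S - R) \<union> N" and pq: "p \<noteq> q" for p q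
  proof (cases "p \<in> N")
    case True
    then show ?thesis using dN new_old q pq by blast
  next
    case False
    then show ?thesis using dS new_old[of q p] p q pq by (auto simp: Int_commute)
  qed
  have "(\<Union>p\<in>(S - R) \<union> N. set p) = V"
  proof -
    have "(\<Union>p\<in>(S - R) \<union> N. set p) = (\<Union>p\<in>S - R. set p) \<union> (\<Union>p\<in>R. set p)"
      using uN by (simp add: UN_Un)
    also have "\<dots> = (\<Union>p\<in>S. set p)" using RS by blast
    finally show ?thesis using uS by simp
  qed
  moreover have "finite ((S - R) \<union> N)" "\<forall>p\<in>(S - R) \<union> N. is_path E p"
    using pp N by (auto simp: path_partition_def path_replacement_def)
  ultimately show ?thesis using disj unfolding path_partition_def by blast
qed

lemma goes_toD:
  assumes "goes_to V E S x y"
  shows "E x y" "y \<in> V1 E S" "\<not> path_nbr E S x y" "x \<in> V2 V E S"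
  using assms by (auto simp: goes_to_def free_edge_def)

lemma V2_has_target: "x \<in> V2 V E S \<Longrightarrow> \<exists>y. goes_to V E S x y"
  unfolding V2_def goes_to_def by blast

lemma bval_singleton: "bval V E S {x} = sum (weight E S) {y. goes_to V E S x y}"
  by (simp add: bval_def)

lemma weight_end: "y \<in> ends E S \<Longrightarrow> weight E S y = 2/3"
  by (simp add: weight_def)

lemma weight_nonneg: "0 \<le> weight E S y"
  by (simp add: weight_def)

lemma two_proper_parts_weight:
  fixes a b k :: nat
  assumes "a < k" "b < k" "a \<le> 4" "b \<le> 4"
  shows "real (a + b) * (if k \<le> 6 then 1 / real k else 0) \<le> 5/3"
proof (cases "k \<le> 6")
  case True
  then have "3 * a + 3 * b \<le> 5 * k" using assms by (cases "k \<le> 4") linarith+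
  then have "3 * real (a + b) \<le> 5 * real k" by (simp add: distrib_left flip: of_nat_le_iff)
  then show ?thesis using True assms by (simp add: field_simps)
qed simp

locale canonical_partition =
  fixes V :: "'a set" and E :: "'a \<Rightarrow> 'a \<Rightarrow> bool" and S :: "'a list set"
  assumes graph: "simple_graph V E" and canonical: "canonical V E S"
begin

abbreviation targets :: "'a \<Rightarrow> 'a set" where
  "targets x \<equiv> {y. goes_to V E S x y}"

lemma adj_sym: "E u v \<Longrightarrow> E v u"
  using graph by (simp add: simple_graph_def)

lemma partition: "path_partition V E S"
  using canonical by (simp add: canonical_def)

lemma comp_path: "p \<in> S \<Longrightarrow> is_path E p"
  using partition by (simp add: path_partition_def)

lemma comp_unique: "A \<in> S \<Longrightarrow> B \<in> S \<Longrightarrow> y \<in> set A \<Longrightarrow> y \<in> set B \<Longrightarrow> A = B"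
  using partition unfolding path_partition_def by blast

lemma comp_cover: "v \<in> V \<longleftrightarrow> (\<exists>p\<in>S. v \<in> set p)"
  using partition unfolding path_partition_def by blast

lemma card_le_replacement:
  assumes RS: "R \<subseteq> S" and N: "path_replacement E R N"
  shows "card R \<le> card N"
proof -
  have fS: "finite S" using partition by (simp add: path_partition_def)
  have "card S \<le> card ((S - R) \<union> N)"
    using canonical path_partition_replace[OF partition RS N] by (simp add: canonical_def)
  also have "\<dots> \<le> card (S - R) + card N" by (rule card_Un_le)
  also have "card (S - R) = card S - card R" using RS fS by (simp add: card_Diff_subset finite_subset)
  finally show ?thesis using card_mono[OF fS RS] by linarith
qed

lemma replacement_cycle_in_partition:
  assumes RS: "R \<subseteq> S" and N: "path_replacement E R N" and le: "card N \<le> card R"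
    and no_cycle: "\<forall>r\<in>R. \<not> cycle_comp E r"
    and t: "t \<in> N" "cycle_comp E t"
  shows "t \<in> S"
proof (rule ccontr)
  assume tS: "t \<notin> S"
  have fS: "finite S" using partition by (simp add: path_partition_def)
  have fN: "finite N" using N by (simp add: path_replacement_def)
  have pp': "path_partition V E ((S - R) \<union> N)" by (rule path_partition_replace[OF partition RS N])
  have "card S \<le> card ((S - R) \<union> N)" using canonical pp' by (simp add: canonical_def)
  moreover have "card ((S - R) \<union> N) \<le> card S - card R + card N"
    using card_Un_le[of "S - R" N] RS fS by (simp add: card_Diff_subset finite_subset)
  moreover have "card R \<le> card S" using RS fS by (simp add: card_mono)
  ultimately have "card ((S - R) \<union> N) = card S" using le by linarith
  then have "num_cycles E ((S - R) \<union> N) \<le> num_cycles E S" using canonical pp' by (simp add: canonical_def)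
  moreover have "Suc (num_cycles E S) \<le> num_cycles E ((S - R) \<union> N)"
  proof -
    have "insert t {p\<in>S. cycle_comp E p} \<subseteq> {p\<in>(S - R) \<union> N. cycle_comp E p}"
      using no_cycle t by blast
    moreover have "finite {p\<in>(S - R) \<union> N. cycle_comp E p}" using fS fN by simp
    ultimately have "card (insert t {p\<in>S. cycle_comp E p}) \<le> num_cycles E ((S - R) \<union> N)"
      unfolding num_cycles_def by (rule card_mono[rotated])
    then show ?thesis using tS fS by (simp add: num_cycles_def)
  qed
  ultimately show False by simp
qed

lemma end_comp:
  assumes "y \<in> ends E S" "A \<in> S" "y \<in> set A"
  shows "\<not> cycle_comp E A" "y = hd A \<or> y = last A"
proof -
  obtain Q where Q: "path_comp E S Q" "y = hd Q \<or> y = last Q"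
    using assms(1) unfolding ends_def by blast
  then have "Q \<in> S" "Q \<noteq> []" by (auto simp: path_comp_def)
  then have "Q = A" using comp_unique assms Q(2) by (metis hd_in_set last_in_set)
  then show "\<not> cycle_comp E A" "y = hd A \<or> y = last A" using Q by (auto simp: path_comp_def)
qed

lemma V1_non_end_comp:
  assumes "y \<in> V1 E S" "y \<notin> ends E S" "A \<in> S" "y \<in> set A"
  shows "cycle_comp E A"
proof -
  obtain C where "C \<in> S" "cycle_comp E C" "y \<in> set C"
    using assms unfolding V1_def cyc_verts_def by blast
  then show ?thesis using comp_unique assms by blast
qed

lemma V1_comp_path_from:
  assumes "y \<in> V1 E S"
  obtains A L where "A \<in> S" "y \<in> set A" "is_path E L" "set L = set A" "hd L = y"
proof (cases "y \<in> ends E S")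
  case True
  then obtain Q where Q: "path_comp E S Q" "y = hd Q \<or> y = last Q" unfolding ends_def by blast
  then have QS: "Q \<in> S" and Qne: "Q \<noteq> []" by (auto simp: path_comp_def)
  then have yQ: "y \<in> set Q" using Q by auto
  have pQ: "is_path E Q" "is_path E (rev Q)" using comp_path[OF QS] is_path_rev adj_sym by auto
  show ?thesis
  proof (cases "y = hd Q")
    case True then show ?thesis using that[OF QS yQ pQ(1)] by simp
  next
    case False
    then have "y = hd (rev Q)" using Q(2) Qne by (simp add: hd_rev)
    then show ?thesis using that[OF QS yQ pQ(2)] by simp
  qed
next
  case False
  then obtain A where A: "A \<in> S" "cycle_comp E A" "y \<in> set A"
    using assms unfolding V1_def cyc_verts_def by blast
  moreover have "distinct A" using comp_path[OF A(1)] by (simp add: is_path_def)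
  ultimately obtain L where "is_path E L" "set L = set A" "hd L = y"
    using cycle_comp_path_from[OF A(2)] by blast
  then show ?thesis using that A by blast
qed

lemma card_cycle_comp: "A \<in> S \<Longrightarrow> cycle_comp E A \<Longrightarrow> 3 \<le> card (set A)"
  using comp_path by (simp add: is_path_def cycle_comp_def distinct_card)

lemma weight_cycle_comp:
  assumes "A \<in> S" "cycle_comp E A" "y \<in> set A"
  shows "weight E S y = (if card (set A) \<le> 6 then 1 / real (card (set A)) else 0)"
proof -
  have "cycle_of E S y = A" unfolding cycle_of_def
    using assms comp_unique by (intro the_equality) auto
  moreover have "y \<notin> ends E S" using end_comp(1) assms by blast
  moreover have "y \<in> cyc_verts E S" using assms by (auto simp: cyc_verts_def)
  ultimately show ?thesis by (simp add: weight_def)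
qed

lemma sum_weight_cycle_comp:
  assumes "A \<in> S" "cycle_comp E A" "T \<subseteq> set A"
  shows "sum (weight E S) T = real (card T) * (if card (set A) \<le> 6 then 1 / real (card (set A)) else 0)"
proof -
  have "sum (weight E S) T = sum (\<lambda>_. if card (set A) \<le> 6 then 1 / real (card (set A)) else 0) T"
    by (rule sum.cong) (use assms weight_cycle_comp in auto)
  then show ?thesis by simp
qed

lemma weight_non_end:
  assumes "y \<in> V1 E S" "y \<notin> ends E S"
  shows "weight E S y \<le> 1/3"
proof -
  obtain A where A: "A \<in> S" "y \<in> set A" using assms unfolding V1_def cyc_verts_def by blast
  then have "cycle_comp E A" using V1_non_end_comp assms by blast
  then have "3 \<le> card (set A)" "weight E S y = (if card (set A) \<le> 6 then 1 / real (card (set A)) else 0)"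
    using A card_cycle_comp weight_cycle_comp by auto
  then show ?thesis by (simp add: divide_simps)
qed

lemma weight_V1: "y \<in> V1 E S \<Longrightarrow> weight E S y \<le> 2/3"
  using weight_end weight_non_end by (cases "y \<in> ends E S") fastforce+

lemma path_nbr_adj: "path_nbr E S u v \<Longrightarrow> E u v"
  unfolding path_nbr_def path_comp_def using comp_path adj_sym by (auto simp: is_path_def)

lemma card_targets:
  assumes deg: "card {u\<in>V. E x u} = k" and a: "path_nbr E S x a" and b: "path_nbr E S x b"
    and ab: "a \<noteq> b"
  shows "finite (targets x)" "card (targets x) \<le> k - 2"
proof -
  let ?N = "{u\<in>V. E x u}"
  have fN: "finite ?N" using graph by (simp add: simple_graph_def)
  have "a \<in> ?N" "b \<in> ?N" using a b path_nbr_adj graph by (auto simp: simple_graph_def)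
  then have "card (?N - {a, b}) = k - 2" using deg ab fN by (simp add: card_Diff_subset)
  moreover have "targets x \<subseteq> ?N - {a, b}" using a b graph
    by (auto dest: goes_toD simp: simple_graph_def)
  moreover have "finite (?N - {a, b})" using fN by simp
  ultimately show "finite (targets x)" "card (targets x) \<le> k - 2"
    using finite_subset card_mono by metis+
qed

lemma no_path_joining_comps:
  assumes "A \<in> S" "B \<in> S" "A \<noteq> B" "is_path E p" "set p = set A \<union> set B"
  shows False
proof -
  have "path_replacement E {A, B} {p}" using assms by (auto simp: path_replacement_def)
  then have "card {A, B} \<le> card {p}" using card_le_replacement[of "{A, B}"] assms by blast
  then show False using assms(3) by simp
qed

end

text \<open>P is the path component P0 read in either direction, so everything proved about the
  pair (x1, x2) also applies to (x2, x1) by reading P backwards.\<close>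

locale split_path = canonical_partition +
  fixes P0 P :: "'a list" and i :: nat
  assumes regular: "regular V E 6" and path_comp_P0: "path_comp E S P0"
    and orientation: "P = P0 \<or> P = rev P0" and split: "Suc i < length P"
    and x1_V2: "P ! i \<in> V2 V E S" and x2_V2: "P ! Suc i \<in> V2 V E S"
begin

abbreviation "x1 \<equiv> P ! i"
abbreviation "x2 \<equiv> P ! Suc i"
abbreviation "o1 \<equiv> hd P"
abbreviation "o2 \<equiv> last P"
abbreviation "front \<equiv> take (Suc i) P"
abbreviation "rear \<equiv> drop (Suc i) P"

lemma P0_in_S: "P0 \<in> S" and P0_not_cycle: "\<not> cycle_comp E P0"
  using path_comp_P0 by (auto simp: path_comp_def)

lemma set_P: "set P = set P0" and length_P: "length P = length P0"
  using orientation by auto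

lemma path_P: "is_path E P"
  using orientation comp_path[OF P0_in_S] is_path_rev[of E P0] adj_sym by blast

lemma distinct_P: "distinct P" and P_ne: "P \<noteq> []"
  using path_P by (simp_all add: is_path_def)

lemma other_comp_disjoint: "A \<in> S \<Longrightarrow> A \<noteq> P0 \<Longrightarrow> set A \<inter> set P = {}"
  using partition P0_in_S set_P unfolding path_partition_def by auto

lemma path_nbr_P:
  assumes "Suc j < length P" shows "path_nbr E S (P ! j) (P ! Suc j)"
proof (cases "P = P0")
  case True then show ?thesis
    using assms path_comp_P0 unfolding path_nbr_def by metis
next
  case False
  then have r: "P = rev P0" using orientation by simp
  let ?k = "length P0 - Suc (Suc j)"
  have "Suc ?k < length P0" using assms length_P by simp
  moreover have "P ! j = P0 ! Suc ?k" "P ! Suc j = P0 ! ?k"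
    using assms r by (simp_all add: rev_nth Suc_diff_Suc)
  ultimately show ?thesis using path_comp_P0 unfolding path_nbr_def by metis
qed

lemma ends_P: "o1 \<in> ends E S" "o2 \<in> ends E S"
  using orientation path_comp_P0 unfolding ends_def by (auto simp: hd_rev last_rev)

lemma V1_on_P:
  assumes "y \<in> V1 E S" "y \<in> set P" shows "y = o1 \<or> y = o2"
proof -
  have y0: "y \<in> set P0" using assms(2) set_P by simp
  then have "y \<in> ends E S" using V1_non_end_comp[OF assms(1) _ P0_in_S] P0_not_cycle by blast
  then have "y = hd P0 \<or> y = last P0" using end_comp(2)[OF _ P0_in_S y0] by blast
  then show ?thesis using orientation P_ne by (auto simp: hd_rev last_rev)
qed

lemma x1_not_V1: "x1 \<notin> V1 E S" and x2_not_V1: "x2 \<notin> V1 E S"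
  using x1_V2 x2_V2 by (auto simp: V2_def)

lemma x1_interior: "0 < i"
  using x1_not_V1 ends_P P_ne by (cases i) (auto simp: V1_def hd_conv_nth)

lemma x2_interior: "Suc (Suc i) < length P"
proof (rule ccontr)
  assume "\<not> Suc (Suc i) < length P"
  then have "Suc i = length P - 1" using split by simp
  then have "x2 = o2" using P_ne by (simp add: last_conv_nth)
  then show False using x2_not_V1 ends_P by (simp add: V1_def)
qed

lemma front_path: "is_path E front" and rear_path: "is_path E rear"
  using is_path_take[OF path_P] is_path_drop[OF path_P split] by simp_all

lemma front_ends: "hd front = o1" "last front = x1"
proof -
  show "hd front = o1" using P_ne by (cases P) auto
  show "last front = x1" using split by (simp add: take_Suc_conv_app_nth)
qed

lemma rear_ends: "hd rear = x2" "last rear = o2"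
  using split by (simp_all add: hd_drop_conv_nth)

lemma front_rear_disjoint: "set front \<inter> set rear = {}"
  using distinct_P by (simp add: set_take_disj_set_drop_if_distinct)

lemma front_rear_cover: "set front \<union> set rear = set P"
  by (metis append_take_drop_id set_append)

lemma front_ne: "front \<noteq> []" and rear_ne: "rear \<noteq> []"
  using front_path rear_path by (auto simp: is_path_def)

lemma not_goes_to_hd_if_first_exits:
  assumes g1: "goes_to V E S x1 y1" and y1: "y1 \<notin> set P"
  shows "\<not> goes_to V E S x2 o1"
proof
  assume g2: "goes_to V E S x2 o1"
  obtain A L where A: "A \<in> S" "y1 \<in> set A" and L: "is_path E L" "set L = set A" "hd L = y1"
    using V1_comp_path_from[OF goes_toD(2)[OF g1]] by blast
  have AP: "A \<noteq> P0" using A y1 set_P by auto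
  have p: "is_path E (rev front @ rear)"
    by (rule is_path_append[OF is_path_rev[OF adj_sym front_path] rear_path])
       (use front_rear_disjoint rear_ends front_ends goes_toD(1)[OF g2] adj_sym front_ne in \<open>auto simp: last_rev\<close>)
  have "is_path E (rev L @ rev front @ rear)"
    by (rule is_path_append[OF is_path_rev[OF adj_sym L(1)] p])
       (use other_comp_disjoint[OF A(1) AP] L front_rear_cover front_ends goes_toD(1)[OF g1] adj_sym front_ne
         in \<open>auto simp: last_rev hd_rev\<close>)
  then show False
    by (rule no_path_joining_comps[OF P0_in_S A(1) AP[symmetric]])
       (use L front_rear_cover set_P in auto)
qed

lemma second_stays_on_P_if_first_goes_to_last:
  assumes g1: "goes_to V E S x1 o2" and g2: "goes_to V E S x2 y2"
  shows "y2 \<in> set P"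
proof (rule ccontr)
  assume y2: "y2 \<notin> set P"
  obtain A L where A: "A \<in> S" "y2 \<in> set A" and L: "is_path E L" "set L = set A" "hd L = y2"
    using V1_comp_path_from[OF goes_toD(2)[OF g2]] by blast
  have AP: "A \<noteq> P0" using A y2 set_P by auto
  have p: "is_path E (rev rear @ L)"
    by (rule is_path_append[OF is_path_rev[OF adj_sym rear_path] L(1)])
       (use other_comp_disjoint[OF A(1) AP] L front_rear_cover rear_ends goes_toD(1)[OF g2] rear_ne
         in \<open>auto simp: last_rev\<close>)
  have "is_path E (front @ rev rear @ L)"
    by (rule is_path_append[OF front_path p])
       (use other_comp_disjoint[OF A(1) AP] L front_rear_cover front_rear_disjoint front_ends rear_ends
         goes_toD(1)[OF g1] rear_ne in \<open>auto simp: hd_rev\<close>)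
  then show False
    by (rule no_path_joining_comps[OF P0_in_S A(1) AP[symmetric]])
       (use L front_rear_cover set_P in auto)
qed

lemma not_cross_to_ends:
  assumes g1: "goes_to V E S x1 o2" and g2: "goes_to V E S x2 o1"
  shows False
proof -
  \<comment> \<open>front and reversed rear close up into a spanning cycle of P0\<close>
  let ?q = "front @ rev rear"
  have "is_path E ?q"
    by (rule is_path_append[OF front_path is_path_rev[OF adj_sym rear_path]])
       (use front_rear_disjoint front_ends rear_ends goes_toD(1)[OF g1] rear_ne in \<open>auto simp: hd_rev\<close>)
  moreover have "last ?q = x2" "hd ?q = o1" using rear_ends front_ends rear_ne front_ne
    by (simp_all add: last_rev)
  moreover have "set ?q = set P0" using front_rear_cover set_P by auto
  moreover have "3 \<le> length P0" using x2_interior x1_interior length_P by simp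
  ultimately have "cycle_comp E P0"
    using goes_toD(1)[OF g2] adj_sym unfolding cycle_comp_def
    by (intro conjI exI[of _ ?q]) (auto simp: is_path_def)
  then show False using P0_not_cycle by simp
qed

lemma no_path_between_exit_targets:
  assumes g1: "goes_to V E S x1 y1" and g2: "goes_to V E S x2 y2"
    and A: "A \<in> S" "A \<noteq> P0"
    and M: "is_path E M" "set M = set A" "hd M = y1" "last M = y2"
  shows False
proof -
  have "M \<noteq> []" using M(1) by (simp add: is_path_def)
  have p: "is_path E (M @ rear)"
    by (rule is_path_append[OF M(1) rear_path])
       (use other_comp_disjoint[OF A] M front_rear_cover rear_ends goes_toD(1)[OF g2] adj_sym in auto)
  have "is_path E (front @ M @ rear)"
    by (rule is_path_append[OF front_path p])
       (use other_comp_disjoint[OF A] M front_rear_cover front_ends goes_toD(1)[OF g1]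
         front_rear_disjoint \<open>M \<noteq> []\<close> in auto)
  then show False
    by (rule no_path_joining_comps[OF P0_in_S A(1) A(2)[symmetric]])
       (use M front_rear_cover set_P in auto)
qed

lemma not_goes_to_last_if_first_goes_to_end:
  assumes g1: "goes_to V E S x1 y1" and y1: "y1 \<in> ends E S" "y1 \<notin> set P"
  shows "\<not> goes_to V E S x2 o2"
proof
  assume g2: "goes_to V E S x2 o2"
  obtain A L where A: "A \<in> S" "y1 \<in> set A" and L: "is_path E L" "set L = set A" "hd L = y1"
    using V1_comp_path_from[OF goes_toD(2)[OF g1]] by blast
  have AP: "A \<noteq> P0" using A y1 set_P by auto
  have A_path: "\<not> cycle_comp E A" using end_comp(1)[OF y1(1) A] .
  have front_L: "is_path E (front @ L)"
    by (rule is_path_append[OF front_path L(1)])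
       (use other_comp_disjoint[OF A(1) AP] L front_rear_cover front_ends goes_toD(1)[OF g1] in auto)
  \<comment> \<open>rear closes up into a cycle, since x2 and o2 are not path neighbours\<close>
  have "3 \<le> length rear"
  proof (rule ccontr)
    assume "\<not> 3 \<le> length rear"
    then have "length P = Suc (Suc (Suc i))" using x2_interior by simp
    then have "o2 = P ! Suc (Suc i)" using P_ne by (simp add: last_conv_nth)
    then show False using path_nbr_P[OF x2_interior] goes_toD(3)[OF g2] by simp
  qed
  then have rear_cycle: "cycle_comp E rear"
    using rear_path rear_ends goes_toD(1)[OF g2] adj_sym unfolding cycle_comp_def
    by (intro conjI exI[of _ rear]) (auto simp: is_path_def)
  have "path_replacement E {P0, A} {front @ L, rear}"
    using front_L rear_path front_rear_disjoint other_comp_disjoint[OF A(1) AP] L front_rear_cover set_P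
    unfolding path_replacement_def by auto
  moreover have "card {front @ L, rear} \<le> card {P0, A}" using AP by (simp add: card_insert_if)
  ultimately have "rear \<in> S"
    using replacement_cycle_in_partition[of "{P0, A}" "{front @ L, rear}" rear]
      P0_in_S A(1) P0_not_cycle A_path rear_cycle by blast
  moreover have "x2 \<in> set rear" using rear_ends(1) rear_ne by (metis hd_in_set)
  moreover have "x2 \<in> set P0" using split set_P by (metis nth_mem)
  ultimately have "rear = P0" using comp_unique P0_in_S by blast
  then show False using rear_cycle P0_not_cycle by simp
qed

lemma exit_targets_same_comp:
  assumes g1: "goes_to V E S x1 y1" and g2: "goes_to V E S x2 y2"
    and y1: "y1 \<notin> set P" and y2: "y2 \<notin> set P"
  obtains A where "A \<in> S" "A \<noteq> P0" "y1 \<in> set A" "y2 \<in> set A"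
proof -
  obtain A L1 where A: "A \<in> S" "y1 \<in> set A" and L1: "is_path E L1" "set L1 = set A" "hd L1 = y1"
    using V1_comp_path_from[OF goes_toD(2)[OF g1]] by blast
  obtain B L2 where B: "B \<in> S" "y2 \<in> set B" and L2: "is_path E L2" "set L2 = set B" "hd L2 = y2"
    using V1_comp_path_from[OF goes_toD(2)[OF g2]] by blast
  have AP: "A \<noteq> P0" and BP: "B \<noteq> P0" using A B y1 y2 set_P by auto
  have "A = B"
  proof (rule ccontr)
    assume AB: "A \<noteq> B"
    have p1: "is_path E (front @ L1)"
      by (rule is_path_append[OF front_path L1(1)])
         (use other_comp_disjoint[OF A(1) AP] L1 front_rear_cover front_ends goes_toD(1)[OF g1] in auto)
    have p2: "is_path E (rev L2 @ rear)"
      by (rule is_path_append[OF is_path_rev[OF adj_sym L2(1)] rear_path])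
         (use other_comp_disjoint[OF B(1) BP] L2 front_rear_cover rear_ends goes_toD(1)[OF g2] adj_sym
           in \<open>auto simp: last_rev\<close>)
    have "set A \<inter> set B = {}" using partition A(1) B(1) AB unfolding path_partition_def by blast
    then have "set (front @ L1) \<inter> set (rev L2 @ rear) = {}"
      using front_rear_disjoint other_comp_disjoint[OF A(1) AP] other_comp_disjoint[OF B(1) BP]
        L1 L2 front_rear_cover by auto
    then have "path_replacement E {P0, A, B} {front @ L1, rev L2 @ rear}"
      using p1 p2 L1 L2 front_rear_cover set_P unfolding path_replacement_def by (auto simp: Int_commute)
    then have "card {P0, A, B} \<le> card {front @ L1, rev L2 @ rear}"
      using card_le_replacement[of "{P0, A, B}"] P0_in_S A(1) B(1) by blast
    also have "\<dots> \<le> 2" by (simp add: card_insert_if)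
    finally show False using AP BP AB by simp
  qed
  then show ?thesis using that A B AP by blast
qed

lemma exit_targets_common_comp:
  assumes g1: "goes_to V E S x1 y1" and g2: "goes_to V E S x2 y2"
    and y1: "y1 \<notin> set P" and y2: "y2 \<notin> set P"
  obtains A where "A \<in> S" "A \<noteq> P0" "y1 \<in> set A" "y2 \<in> set A" "cycle_comp E A \<or> y1 = y2"
proof -
  obtain A where A: "A \<in> S" "A \<noteq> P0" "y1 \<in> set A" "y2 \<in> set A"
    by (rule exit_targets_same_comp[OF g1 g2 y1 y2])
  have "y1 = y2" if "\<not> cycle_comp E A"
  proof (rule ccontr)
    assume ne: "y1 \<noteq> y2"
    have "y1 \<in> ends E S" "y2 \<in> ends E S"
      using V1_non_end_comp goes_toD(2)[OF g1] goes_toD(2)[OF g2] A that by blast+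
    then have "y1 = hd A \<or> y1 = last A" "y2 = hd A \<or> y2 = last A"
      using end_comp(2) A by blast+
    moreover have "is_path E A" "is_path E (rev A)" using comp_path[OF A(1)] is_path_rev adj_sym by auto
    moreover have "A \<noteq> []" using A(3) by auto
    ultimately show False
      using no_path_between_exit_targets[OF g1 g2 A(1,2), of A]
        no_path_between_exit_targets[OF g1 g2 A(1,2), of "rev A"] ne by (auto simp: hd_rev last_rev)
  qed
  then show ?thesis using that A by blast
qed

lemma card_targets_on_P:
  assumes "0 < j" "Suc j < length P"
  shows "finite (targets (P ! j))" "card (targets (P ! j)) \<le> 4"
proof -
  have "P ! j \<in> V" using assms comp_cover P0_in_S set_P by (metis nth_mem Suc_lessD)
  then have "card {u\<in>V. E (P ! j) u} = 6" using regular by (simp add: regular_def)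
  moreover have "path_nbr E S (P ! j) (P ! (j - 1))" "path_nbr E S (P ! j) (P ! Suc j)"
    using path_nbr_P[of "j - 1"] path_nbr_P[of j] assms unfolding path_nbr_def by auto
  moreover have "P ! (j - 1) \<noteq> P ! Suc j" using distinct_P assms by (simp add: nth_eq_iff_index_eq)
  ultimately show "finite (targets (P ! j))" "card (targets (P ! j)) \<le> 4"
    using card_targets by fastforce+
qed

lemma second_not_to_hd:
  assumes n1: "\<not> goes_to V E S x1 o1"
  shows "\<not> goes_to V E S x2 o1"
proof
  assume g2: "goes_to V E S x2 o1"
  obtain e where e: "goes_to V E S x1 e" using V2_has_target[OF x1_V2] by blast
  show False
  proof (cases "e \<in> set P")
    case True
    then have "e = o2" using V1_on_P[OF goes_toD(2)[OF e]] n1 e by blast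
    then show False using not_cross_to_ends e g2 by blast
  next
    case False
    then show False using not_goes_to_hd_if_first_exits[OF e] g2 by blast
  qed
qed

lemma second_exits:
  assumes n1: "\<not> goes_to V E S x1 o1" and g: "goes_to V E S x2 y" and "y \<noteq> o2"
  shows "y \<notin> set P"
proof
  assume "y \<in> set P"
  then have "y = o1" using V1_on_P[OF goes_toD(2)[OF g]] \<open>y \<noteq> o2\<close> by blast
  then show False using second_not_to_hd[OF n1] g by simp
qed

lemma bval_bound_first_to_last:
  assumes n1: "\<not> goes_to V E S x1 o1" and g: "goes_to V E S x1 o2"
  shows "bval V E S {x1} + bval V E S {x2} \<le> 7/3"
proof -
  have "targets x2 \<subseteq> {o2}"
    using second_stays_on_P_if_first_goes_to_last[OF g] second_exits[OF n1] by blast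
  then have T2: "targets x2 = {o2}" using V2_has_target[OF x2_V2] by blast
  then have b2: "bval V E S {x2} \<le> 2/3"
    using weight_V1 ends_P(2) by (simp add: bval_singleton V1_def)
  have rest: "weight E S y \<le> 1/3" if y: "y \<in> targets x1 - {o2}" for y
  proof -
    have gy: "goes_to V E S x1 y" using y by simp
    then have "y \<notin> set P" using V1_on_P[OF goes_toD(2)[OF gy]] y n1 by blast
    then have "y \<notin> ends E S" using not_goes_to_last_if_first_goes_to_end[OF gy] T2 by blast
    then show ?thesis using weight_non_end goes_toD(2)[OF gy] by blast
  qed
  have fin: "finite (targets x1)" and card: "card (targets x1) \<le> 4"
    using card_targets_on_P x1_interior split by auto
  have "bval V E S {x1} = weight E S o2 + sum (weight E S) (targets x1 - {o2})"
    using g fin by (simp add: bval_singleton sum.remove)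
  also have "\<dots> \<le> 2/3 + real (card (targets x1 - {o2})) * (1/3)"
    using weight_V1[OF goes_toD(2)[OF g]] sum_bounded_above[of "targets x1 - {o2}" "weight E S" "1/3", OF rest]
    by linarith
  also have "\<dots> \<le> 5/3" using card g fin by simp
  finally show ?thesis using b2 by simp
qed

lemma bval_bound_first_to_exit_end:
  assumes n1: "\<not> goes_to V E S x1 o1" and n2: "\<not> goes_to V E S x1 o2"
    and ge: "goes_to V E S x1 e" and e: "e \<in> ends E S"
  shows "bval V E S {x1} + bval V E S {x2} \<le> 7/3"
proof -
  have exits: "y \<notin> set P" if "goes_to V E S x1 y" for y
    using V1_on_P[OF goes_toD(2)[OF that]] that n1 n2 by blast
  have "targets x2 \<subseteq> {e}"
  proof
    fix y assume gy: "y \<in> targets x2"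
    have "y \<noteq> o2" using not_goes_to_last_if_first_goes_to_end[OF ge e exits[OF ge]] gy by blast
    then obtain A where "A \<in> S" "e \<in> set A" "cycle_comp E A \<or> e = y"
      using exit_targets_common_comp[OF ge _ exits[OF ge] second_exits[OF n1]] gy by blast
    then show "y \<in> {e}" using end_comp(1)[OF e] by auto
  qed
  then have g2e: "goes_to V E S x2 e" using V2_has_target[OF x2_V2] by blast
  have "targets x1 \<subseteq> {e}"
  proof
    fix y assume gy: "y \<in> targets x1"
    obtain A where "A \<in> S" "e \<in> set A" "cycle_comp E A \<or> y = e"
      using exit_targets_common_comp[OF _ g2e exits] gy exits[OF ge] by blast
    then show "y \<in> {e}" using end_comp(1)[OF e] by auto
  qed
  have "sum (weight E S) T \<le> 2/3" if "T \<subseteq> {e}" for T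
    using sum_mono2[OF _ that, of "weight E S"] weight_nonneg weight_end[OF e] by simp
  then have "bval V E S {x1} \<le> 2/3" "bval V E S {x2} \<le> 2/3"
    using \<open>targets x1 \<subseteq> {e}\<close> \<open>targets x2 \<subseteq> {e}\<close> by (simp_all add: bval_singleton)
  then show ?thesis by simp
qed

text \<open>A spanning path of A from a target of x1 to a target of x2 would join P and A into one
  path.\<close>

lemma cycle_not_within_first_targets:
  assumes g2: "goes_to V E S x2 y2" and A: "A \<in> S" "A \<noteq> P0" "cycle_comp E A" "y2 \<in> set A"
  shows "\<not> set A \<subseteq> targets x1"
proof
  assume sub: "set A \<subseteq> targets x1"
  have "distinct A" using comp_path[OF A(1)] by (simp add: is_path_def)
  then obtain L where L: "is_path E L" "set L = set A" "hd L = y2" "last L \<noteq> y2"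
    using cycle_comp_path_from[OF A(3) _ A(4)] by blast
  then have "L \<noteq> []" by (auto simp: is_path_def)
  then have gz: "goes_to V E S x1 (last L)" using sub L(2) last_in_set by blast
  show False
    using no_path_between_exit_targets[OF gz g2 A(1,2) is_path_rev[OF adj_sym L(1)]] L \<open>L \<noteq> []\<close>
    by (simp add: hd_rev last_rev)
qed

lemma cycle_not_within_second_targets:
  assumes g1: "goes_to V E S x1 y1" and A: "A \<in> S" "A \<noteq> P0" "cycle_comp E A" "y1 \<in> set A"
  shows "\<not> set A \<subseteq> targets x2"
proof
  assume sub: "set A \<subseteq> targets x2"
  have "distinct A" using comp_path[OF A(1)] by (simp add: is_path_def)
  then obtain L where L: "is_path E L" "set L = set A" "hd L = y1" "last L \<noteq> y1"
    using cycle_comp_path_from[OF A(3) _ A(4)] by blast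
  then have "L \<noteq> []" by (auto simp: is_path_def)
  then have gz: "goes_to V E S x2 (last L)" using sub L(2) last_in_set by blast
  show False using no_path_between_exit_targets[OF g1 gz A(1,2) L(1-3)] by simp
qed

lemma targets_in_common_cycle:
  assumes n1: "\<not> goes_to V E S x1 o1" and n2: "\<not> goes_to V E S x1 o2"
    and no_end: "\<forall>y\<in>targets x1. y \<notin> ends E S"
    and g2: "goes_to V E S x2 y2" and "y2 \<noteq> o2"
  obtains A where "A \<in> S" "A \<noteq> P0" "cycle_comp E A"
    "targets x1 \<subset> set A" "targets x2 - {o2} \<subset> set A"
proof -
  have exits: "y \<notin> set P" if "goes_to V E S x1 y" for y
    using V1_on_P[OF goes_toD(2)[OF that]] that n1 n2 by blast
  have y2P: "y2 \<notin> set P" using second_exits[OF n1 g2 \<open>y2 \<noteq> o2\<close>] .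
  obtain e1 where e1: "goes_to V E S x1 e1" using V2_has_target[OF x1_V2] by blast
  obtain A where A: "A \<in> S" "A \<noteq> P0" "e1 \<in> set A" "y2 \<in> set A"
    using exit_targets_common_comp[OF e1 g2 exits[OF e1] y2P] by blast
  have cA: "cycle_comp E A" using V1_non_end_comp[OF goes_toD(2)[OF e1] _ A(1,3)] no_end e1 by blast
  have T1: "targets x1 \<subseteq> set A"
  proof
    fix y assume "y \<in> targets x1"
    then obtain A' where "A' \<in> S" "y \<in> set A'" "y2 \<in> set A'"
      using exit_targets_common_comp[OF _ g2 exits y2P] by blast
    then show "y \<in> set A" using comp_unique[OF A(1) _ A(4)] by blast
  qed
  have T2: "targets x2 - {o2} \<subseteq> set A"
  proof
    fix y assume "y \<in> targets x2 - {o2}"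
    then obtain A' where "A' \<in> S" "e1 \<in> set A'" "y \<in> set A'"
      using exit_targets_common_comp[OF e1 _ exits[OF e1] second_exits[OF n1]] by blast
    then show "y \<in> set A" using comp_unique[OF A(1) _ A(3)] by blast
  qed
  have "\<not> set A \<subseteq> targets x1" "\<not> set A \<subseteq> targets x2"
    using cycle_not_within_first_targets[OF g2 A(1,2) cA A(4)]
      cycle_not_within_second_targets[OF e1 A(1,2) cA A(3)] by blast+
  then show ?thesis using that A(1,2) cA T1 T2 by blast
qed

lemma bval_second_le: "bval V E S {x2} \<le> sum (weight E S) (targets x2 - {o2}) + 2/3"
proof (cases "o2 \<in> targets x2")
  case True
  have "finite (targets x2)" using card_targets_on_P x2_interior by auto
  then have "bval V E S {x2} = weight E S o2 + sum (weight E S) (targets x2 - {o2})"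
    using True by (simp add: bval_singleton sum.remove)
  then show ?thesis using weight_end[OF ends_P(2)] by simp
qed (simp add: bval_singleton)

lemma bval_bound_first_to_cycles:
  assumes n1: "\<not> goes_to V E S x1 o1" and n2: "\<not> goes_to V E S x1 o2"
    and no_end: "\<forall>y\<in>targets x1. y \<notin> ends E S"
  shows "bval V E S {x1} + bval V E S {x2} \<le> 7/3"
proof -
  have fin1: "finite (targets x1)" and card1: "card (targets x1) \<le> 4"
    using card_targets_on_P x1_interior split by auto
  have card2: "card (targets x2) \<le> 4" using card_targets_on_P x2_interior by auto
  have b2: "bval V E S {x2} \<le> sum (weight E S) (targets x2 - {o2}) + 2/3"
    by (rule bval_second_le)
  show ?thesis
  proof (cases "targets x2 - {o2} = {}")
    case True
    have "weight E S y \<le> 1/3" if "y \<in> targets x1" for y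
      using that no_end weight_non_end[of y] goes_toD(2)[of V E S x1 y] by simp
    then have "bval V E S {x1} \<le> real (card (targets x1)) * (1/3)"
      unfolding bval_singleton by (rule sum_bounded_above)
    then show ?thesis using b2 True card1 by simp
  next
    case False
    then obtain y2 where y2: "goes_to V E S x2 y2" "y2 \<noteq> o2" by blast
    obtain A where A: "A \<in> S" "A \<noteq> P0" "cycle_comp E A"
      and T1: "targets x1 \<subset> set A" and T2: "targets x2 - {o2} \<subset> set A"
      by (rule targets_in_common_cycle[OF n1 n2 no_end y2])
    define w where "w = (if card (set A) \<le> 6 then 1 / real (card (set A)) else 0)"
    have "sum (weight E S) T = real (card T) * w" if "T \<subseteq> set A" for T
      using sum_weight_cycle_comp[OF A(1,3) that] by (simp add: w_def)
    then have "bval V E S {x1} = real (card (targets x1)) * w"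
      and "sum (weight E S) (targets x2 - {o2}) = real (card (targets x2 - {o2})) * w"
      using T1 T2 by (simp_all add: bval_singleton)
    moreover have "real (card (targets x1) + card (targets x2 - {o2})) * w \<le> 5/3"
    proof -
      have "card (targets x1) < card (set A)" "card (targets x2 - {o2}) < card (set A)"
        using psubset_card_mono[OF _ T1] psubset_card_mono[OF _ T2] by simp_all
      moreover have "card (targets x2 - {o2}) \<le> 4" using card2 card_Diff1_le[of "targets x2" o2] by linarith
      ultimately show ?thesis unfolding w_def using card1 by (intro two_proper_parts_weight)
    qed
    ultimately show ?thesis using b2 by (simp add: algebra_simps)
  qed
qed

lemma bval_bound_unless_first_to_hd:
  assumes n1: "\<not> goes_to V E S x1 o1"
  shows "bval V E S {x1} + bval V E S {x2} \<le> 7/3"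
proof (cases "goes_to V E S x1 o2")
  case True
  then show ?thesis by (rule bval_bound_first_to_last[OF n1])
next
  case n2: False
  show ?thesis
  proof (cases "\<exists>e\<in>targets x1. e \<in> ends E S")
    case True
    then obtain e where "goes_to V E S x1 e" "e \<in> ends E S" by blast
    then show ?thesis by (rule bval_bound_first_to_exit_end[OF n1 n2])
  next
    case False
    then show ?thesis by (intro bval_bound_first_to_cycles[OF n1 n2]) blast
  qed
qed

end

theorem mainTheorem13:
  fixes V :: "'a set" and E :: "'a \<Rightarrow> 'a \<Rightarrow> bool" and S :: "'a list set"
    and P :: "'a list" and o1 o2 x1 x2 :: 'a and i :: nat
  assumes "simple_graph V E"
    and "regular V E 6"
    and "canonical V E S"
    and "path_comp E S P"
    and "o1 = hd P" and "o2 = last P"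
    and "Suc i < length P" and "x1 = P ! i" and "x2 = P ! Suc i"
    and "x1 \<in> V2 V E S" and "x2 \<in> V2 V E S"
    and "\<forall>d. dangerous V E S d \<longrightarrow> \<not> free_edge E S x1 d"
    and "\<forall>d. dangerous V E S d \<longrightarrow> \<not> free_edge E S x2 d"
    and "bval V E S {x1} + bval V E S {x2} > 7/3"
  shows "goes_to V E S x1 o1 \<and> goes_to V E S x2 o2"
proof
  interpret forward: split_path V E S P P i
    using assms by unfold_locales auto
  show "goes_to V E S x1 o1"
    using forward.bval_bound_unless_first_to_hd assms(5,8,9,14) by fastforce
  let ?j = "length P - Suc (Suc i)"
  have j: "rev P ! ?j = x2" "rev P ! Suc ?j = x1"
    using assms(7-9) by (simp_all add: rev_nth Suc_diff_Suc)
  interpret backward: split_path V E S P "rev P" ?j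
    using assms j by unfold_locales auto
  show "goes_to V E S x2 o2"
    using backward.bval_bound_unless_first_to_hd assms(6,14) j by (fastforce simp: hd_rev)
qed

end
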